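(* Let $U$ be the open unit disc centred at the origin of $\mathbb{R}^2$, $f\colon\partial U\to\mathbb{R}$, and suppose $G_f(t)=f(e^{it})$ is Laplace integrable on $[-\pi,\pi]$. Then for every $(r,\theta)\in[0,1)\times[-\pi,\pi]$ the Laplace integral \[F(r,\theta)=\frac{1}{2\pi}\int_{-\pi}^{\pi}G_f(t)P_r(\theta-t)\,dt,\qquad P_r(u)=\frac{1-r^2}{1-2r\cos u+r^2},\] is well defined, and the function $re^{i\theta}\mapsto F(r,\theta)$ is harmonic on $U$.
   Context: Laplace integral on $[a,b]$: with lower/upper Laplace derivates $\underline{LD}_1F(x)$, $\overline{LD}_1F(x)$ being the minimum of the $\liminf$'s, resp. maximum of the $\limsup$'s, as $s\to\infty$ of $s^2\int_0^\delta e^{-st}[F(x+t)-F(x)]dt$ and $(-s^2)\int_0^\delta e^{-st}[F(x-t)-F(x)]dt$ (one-sided at endpoints), a major function of $h$ is a continuous $W$ with $\underline{LD}_1W\geqslant h$, $\underline{LD}_1W>-\infty$ everywhere on $[a,b]$, a minor function a continuous $V$ with $\overline{LD}_1V\leqslant h$, $\overline{LD}_1V<\infty$ everywhere, and $h$ is Laplace integrable if $\sup_V(V(b)-V(a))=\inf_W(W(b)-W(a))$ is finite, the value being $\int_a^bh$. *)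

theory Defs
  imports "HOL-Analysis.Analysis"
begin

definition lap_right :: "(real \<Rightarrow> real) \<Rightarrow> real \<Rightarrow> real \<Rightarrow> real \<Rightarrow> real" where
  "lap_right F x d s = s\<^sup>2 * integral {0..d} (\<lambda>t. exp (- s * t) * (F (x + t) - F x))"

definition lap_left :: "(real \<Rightarrow> real) \<Rightarrow> real \<Rightarrow> real \<Rightarrow> real \<Rightarrow> real" where
  "lap_left F x d s = (- s\<^sup>2) * integral {0..d} (\<lambda>t. exp (- s * t) * (F (x - t) - F x))"

text \<open>Convention for delta: at an interior point we take d = min (x-a) (b-x);
  at the endpoints only the one-sided quotient is used, with d = b - a.
  (For continuous F the liminf/limsup do not depend on the choice of d > 0.)\<close>

definition lower_LD :: "real \<Rightarrow> real \<Rightarrow> (real \<Rightarrow> real) \<Rightarrow> real \<Rightarrow> ereal" where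
  "lower_LD a b F x =
     (if x = a then Liminf at_top (\<lambda>s. ereal (lap_right F x (b - a) s))
      else if x = b then Liminf at_top (\<lambda>s. ereal (lap_left F x (b - a) s))
      else min (Liminf at_top (\<lambda>s. ereal (lap_right F x (min (x - a) (b - x)) s)))
               (Liminf at_top (\<lambda>s. ereal (lap_left F x (min (x - a) (b - x)) s))))"

definition upper_LD :: "real \<Rightarrow> real \<Rightarrow> (real \<Rightarrow> real) \<Rightarrow> real \<Rightarrow> ereal" where
  "upper_LD a b F x =
     (if x = a then Limsup at_top (\<lambda>s. ereal (lap_right F x (b - a) s))
      else if x = b then Limsup at_top (\<lambda>s. ereal (lap_left F x (b - a) s))
      else max (Limsup at_top (\<lambda>s. ereal (lap_right F x (min (x - a) (b - x)) s)))
               (Limsup at_top (\<lambda>s. ereal (lap_left F x (min (x - a) (b - x)) s))))"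

definition laplace_major :: "real \<Rightarrow> real \<Rightarrow> (real \<Rightarrow> real) \<Rightarrow> (real \<Rightarrow> real) \<Rightarrow> bool" where
  "laplace_major a b h W \<longleftrightarrow> continuous_on {a..b} W \<and>
     (\<forall>x\<in>{a..b}. lower_LD a b W x \<ge> ereal (h x) \<and> lower_LD a b W x > -\<infinity>)"

definition laplace_minor :: "real \<Rightarrow> real \<Rightarrow> (real \<Rightarrow> real) \<Rightarrow> (real \<Rightarrow> real) \<Rightarrow> bool" where
  "laplace_minor a b h V \<longleftrightarrow> continuous_on {a..b} V \<and>
     (\<forall>x\<in>{a..b}. upper_LD a b V x \<le> ereal (h x) \<and> upper_LD a b V x < \<infinity>)"

definition laplace_upper :: "real \<Rightarrow> real \<Rightarrow> (real \<Rightarrow> real) \<Rightarrow> ereal" where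
  "laplace_upper a b h = (INF W \<in> {W. laplace_major a b h W}. ereal (W b - W a))"

definition laplace_lower :: "real \<Rightarrow> real \<Rightarrow> (real \<Rightarrow> real) \<Rightarrow> ereal" where
  "laplace_lower a b h = (SUP V \<in> {V. laplace_minor a b h V}. ereal (V b - V a))"

definition laplace_integrable :: "real \<Rightarrow> real \<Rightarrow> (real \<Rightarrow> real) \<Rightarrow> bool" where
  "laplace_integrable a b h \<longleftrightarrow>
     laplace_lower a b h = laplace_upper a b h \<and> \<bar>laplace_upper a b h\<bar> \<noteq> \<infinity>"

definition laplace_integral :: "real \<Rightarrow> real \<Rightarrow> (real \<Rightarrow> real) \<Rightarrow> real" where
  "laplace_integral a b h = real_of_ereal (laplace_upper a b h)"

definition poisson_kernel :: "real \<Rightarrow> real \<Rightarrow> real" where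
  "poisson_kernel r u = (1 - r\<^sup>2) / (1 - 2 * r * cos u + r\<^sup>2)"

definition has_pdx :: "(complex \<Rightarrow> real) \<Rightarrow> real \<Rightarrow> complex \<Rightarrow> bool" where
  "has_pdx g d z \<longleftrightarrow> ((\<lambda>t. g (z + complex_of_real t)) has_real_derivative d) (at 0)"

definition has_pdy :: "(complex \<Rightarrow> real) \<Rightarrow> real \<Rightarrow> complex \<Rightarrow> bool" where
  "has_pdy g d z \<longleftrightarrow> ((\<lambda>t. g (z + \<i> * complex_of_real t)) has_real_derivative d) (at 0)"

definition harmonic_on :: "complex set \<Rightarrow> (complex \<Rightarrow> real) \<Rightarrow> bool" where
  "harmonic_on S u \<longleftrightarrow> open S \<and>
     (\<exists>ux uy uxx uxy uyx uyy.
        (\<forall>z\<in>S. has_pdx u (ux z) z \<and> has_pdy u (uy z) z \<and>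
                has_pdx ux (uxx z) z \<and> has_pdy ux (uxy z) z \<and>
                has_pdx uy (uyx z) z \<and> has_pdy uy (uyy z) z \<and>
                uxx z + uyy z = 0) \<and>
        continuous_on S u \<and> continuous_on S ux \<and> continuous_on S uy \<and>
        continuous_on S uxx \<and> continuous_on S uxy \<and>
        continuous_on S uyx \<and> continuous_on S uyy)"

end

theory Submission
  imports Defs "HOL-Real_Asymp.Real_Asymp" "HOL-Complex_Analysis.Complex_Analysis"
begin

text \<open>
  For Laplace integrable \<open>h\<close> on \<open>[a, b]\<close> let \<open>H(x)\<close> be the infimum of \<open>W(x) - W(a)\<close> over the
  major functions \<open>W\<close>. Given a positive \<open>C\<^sup>1\<close> weight \<open>\<phi>\<close>, the increments of
  \<open>W \<phi> - \<integral> W \<phi>'\<close> (a primitive of \<open>\<phi> dW\<close>) at \<open>x\<close> are \<open>\<phi>(x)\<close> times those of \<open>W\<close> up to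
  \<open>o(\<bar>y - x\<bar>)\<close>. Laplace derivates do not see such errors, so this map turns major and minor
  functions of \<open>h\<close> into major and minor functions of \<open>h \<phi>\<close>. Since \<open>H\<close> is squeezed between
  majors and minors of \<open>h\<close>, the product \<open>h \<phi>\<close> is Laplace integrable with integral
  \<open>H(b) \<phi>(b) - \<integral>\<^sub>a\<^sup>b H \<phi>'\<close>.

  The Poisson kernel \<open>t \<mapsto> P\<^sub>r(\<theta> - t)\<close> is such a weight on \<open>[-\<pi>, \<pi>]\<close>: it is the real part of
  the Schwarz kernel \<open>(e\<^sup>i\<^sup>t + z) / (e\<^sup>i\<^sup>t - z)\<close> at \<open>z = r e\<^sup>i\<^sup>\<theta>\<close>. So the Laplace integral
  is the real part of the Schwarz integral of \<open>dH\<close>, which is holomorphic in \<open>z\<close> by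
  differentiation under the integral sign, and hence harmonic.
\<close>

section \<open>Laplace quotients\<close>

lemma has_integral_exp_mult_id:
  fixes s \<eta> :: real
  assumes "s > 0" "\<eta> \<ge> 0"
  shows "((\<lambda>t. exp (- s * t) * t) has_integral (1 - exp (- s * \<eta>) * (1 + s * \<eta>)) / s\<^sup>2) {0..\<eta>}"
proof -
  let ?F = "\<lambda>t. - (exp (- s * t) * (1 + s * t)) / s\<^sup>2"
  have "((\<lambda>t. exp (- s * t) * t) has_integral (?F \<eta> - ?F 0)) {0..\<eta>}"
  proof (rule fundamental_theorem_of_calculus[OF \<open>\<eta> \<ge> 0\<close>])
    fix t assume "t \<in> {0..\<eta>}"
    show "(?F has_vector_derivative exp (- s * t) * t) (at t within {0..\<eta>})"
      unfolding has_real_derivative_iff_has_vector_derivative[symmetric]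
      by (rule derivative_eq_intros refl | use \<open>s > 0\<close> in \<open>simp add: field_simps power2_eq_square\<close>)+
  qed
  also have "?F \<eta> - ?F 0 = (1 - exp (- s * \<eta>) * (1 + s * \<eta>)) / s\<^sup>2"
    using \<open>s > 0\<close> by (simp add: field_simps)
  finally show ?thesis .
qed

text \<open>Near \<open>t = 0\<close> the kernel \<open>s\<^sup>2 exp (- s t)\<close> has mass \<open>1\<close> against \<open>t\<close>, and it decays
  exponentially away from \<open>0\<close>; so only the behaviour of \<open>E t\<close> for small \<open>t\<close> matters.\<close>

lemma laplace_quotient_le:
  fixes E :: "real \<Rightarrow> real"
  assumes "s > 0" "0 < \<eta>" "\<eta> \<le> \<delta>" "continuous_on {0..\<delta>} E"
    and E_le: "\<And>t. t \<in> {0..\<eta>} \<Longrightarrow> E t \<le> c * t" and M: "\<And>t. t \<in> {0..\<delta>} \<Longrightarrow> \<bar>E t\<bar> \<le> M"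
  shows "s\<^sup>2 * integral {0..\<delta>} (\<lambda>t. exp (- s * t) * E t)
    \<le> c * (1 - exp (- s * \<eta>) * (1 + s * \<eta>)) + (\<delta> - \<eta>) * M * (s\<^sup>2 * exp (- s * \<eta>))"
proof -
  let ?f = "\<lambda>t. exp (- s * t) * E t"
  have int_f: "?f integrable_on {0..\<delta>}"
    by (intro integrable_continuous_interval continuous_intros assms)
  have split: "integral {0..\<eta>} ?f + integral {\<eta>..\<delta>} ?f = integral {0..\<delta>} ?f"
    by (rule Henstock_Kurzweil_Integration.integral_combine) (use assms int_f in auto)
  have near: "integral {0..\<eta>} ?f \<le> c * ((1 - exp (- s * \<eta>) * (1 + s * \<eta>)) / s\<^sup>2)"
  proof (rule has_integral_le)
    show "(?f has_integral integral {0..\<eta>} ?f) {0..\<eta>}"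
      by (intro integrable_integral integrable_subinterval_real[OF int_f]) (use assms in auto)
    show "((\<lambda>t. c * (exp (- s * t) * t)) has_integral
        c * ((1 - exp (- s * \<eta>) * (1 + s * \<eta>)) / s\<^sup>2)) {0..\<eta>}"
      using has_integral_exp_mult_id[of s \<eta>] assms by (intro has_integral_mult_right) auto
  qed (use E_le in \<open>simp add: mult.left_commute\<close>)
  have "norm (integral {\<eta>..\<delta>} ?f) \<le> exp (- s * \<eta>) * M * (\<delta> - \<eta>)"
  proof (rule integral_bound)
    show "continuous_on {\<eta>..\<delta>} ?f"
      by (intro continuous_intros continuous_on_subset[OF assms(4)]) (use assms in auto)
    fix t assume t: "t \<in> {\<eta>..\<delta>}"
    have "norm (?f t) = exp (- s * t) * \<bar>E t\<bar>"
      by (simp add: abs_mult)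
    also have "\<dots> \<le> exp (- s * \<eta>) * M"
      using t assms M[of t] by (intro mult_mono) auto
    finally show "norm (?f t) \<le> exp (- s * \<eta>) * M" .
  qed (use assms in auto)
  then have far: "integral {\<eta>..\<delta>} ?f \<le> exp (- s * \<eta>) * M * (\<delta> - \<eta>)"
    by simp
  have "s\<^sup>2 * integral {0..\<delta>} ?f
      \<le> s\<^sup>2 * (c * ((1 - exp (- s * \<eta>) * (1 + s * \<eta>)) / s\<^sup>2) + exp (- s * \<eta>) * M * (\<delta> - \<eta>))"
    using near far split by (intro mult_left_mono) auto
  also have "\<dots> = c * (1 - exp (- s * \<eta>) * (1 + s * \<eta>)) + (\<delta> - \<eta>) * M * (s\<^sup>2 * exp (- s * \<eta>))"
    using \<open>s > 0\<close> by (simp add: field_simps)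
  finally show ?thesis .
qed

lemma laplace_quotient_eventually_le:
  fixes E :: "real \<Rightarrow> real"
  assumes "0 < \<eta>" "\<eta> \<le> \<delta>" "continuous_on {0..\<delta>} E"
    and "\<And>t. t \<in> {0..\<eta>} \<Longrightarrow> E t \<le> c * t" and "e > 0"
  shows "eventually (\<lambda>s. s\<^sup>2 * integral {0..\<delta>} (\<lambda>t. exp (- s * t) * E t) \<le> c + e) at_top"
proof -
  obtain M where M: "\<And>t. t \<in> {0..\<delta>} \<Longrightarrow> \<bar>E t\<bar> \<le> M"
    using continuous_on_compact_bound[OF compact_Icc \<open>continuous_on {0..\<delta>} E\<close>] by (metis real_norm_def)
  have "((\<lambda>s. c * (1 - exp (- s * \<eta>) * (1 + s * \<eta>)) + (\<delta> - \<eta>) * M * (s\<^sup>2 * exp (- s * \<eta>))) \<longlongrightarrow> c) at_top"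
    using \<open>\<eta> > 0\<close> by real_asymp
  then have "eventually (\<lambda>s. c * (1 - exp (- s * \<eta>) * (1 + s * \<eta>))
      + (\<delta> - \<eta>) * M * (s\<^sup>2 * exp (- s * \<eta>)) < c + e) at_top"
    using \<open>e > 0\<close> by (simp add: order_tendsto_iff)
  moreover have "eventually (\<lambda>s::real. s > 0) at_top"
    by (rule eventually_gt_at_top)
  ultimately show ?thesis
    by eventually_elim (use laplace_quotient_le[OF _ assms(1-4) M] in fastforce)
qed

lemma laplace_quotient_tendsto_0:
  fixes E :: "real \<Rightarrow> real"
  assumes "\<delta> > 0" "continuous_on {0..\<delta>} E"
    and small: "\<And>e. e > 0 \<Longrightarrow> \<exists>\<eta>>0. \<forall>t\<in>{0..\<eta>}. \<bar>E t\<bar> \<le> e * t"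
  shows "((\<lambda>s. s\<^sup>2 * integral {0..\<delta>} (\<lambda>t. exp (- s * t) * E t)) \<longlongrightarrow> 0) at_top"
proof -
  have le: "eventually (\<lambda>s. s\<^sup>2 * integral {0..\<delta>} (\<lambda>t. exp (- s * t) * (\<sigma> * E t)) < e) at_top"
    if "e > 0" "\<bar>\<sigma>\<bar> = 1" for e \<sigma> :: real
  proof -
    obtain \<eta> where "\<eta> > 0" and \<eta>: "\<And>t. t \<in> {0..\<eta>} \<Longrightarrow> \<bar>E t\<bar> \<le> e / 2 * t"
      using small[of "e / 2"] \<open>e > 0\<close> by auto
    have "\<sigma> * E t \<le> e / 2 * t" if "t \<in> {0..min \<eta> \<delta>}" for t
      using \<eta>[of t] that \<open>\<bar>\<sigma>\<bar> = 1\<close> by (auto simp: abs_if split: if_splits)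
    then have "eventually (\<lambda>s. s\<^sup>2 * integral {0..\<delta>} (\<lambda>t. exp (- s * t) * (\<sigma> * E t)) \<le> e / 2 + e / 4) at_top"
      by (intro laplace_quotient_eventually_le[where \<eta> = "min \<eta> \<delta>"] continuous_intros assms)
        (use \<open>\<eta> > 0\<close> assms \<open>e > 0\<close> in auto)
    then show ?thesis
      by eventually_elim (use \<open>e > 0\<close> in auto)
  qed
  show ?thesis
  proof (rule order_tendstoI)
    fix e :: real assume "e > 0"
    from le[OF this, of 1] show "eventually (\<lambda>s. s\<^sup>2 * integral {0..\<delta>} (\<lambda>t. exp (- s * t) * E t) < e) at_top"
      by simp
  next
    fix e :: real assume "e < 0"
    from le[of "- e" "- 1"] this show "eventually (\<lambda>s. s\<^sup>2 * integral {0..\<delta>} (\<lambda>t. exp (- s * t) * E t) > e) at_top"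
      by simp
  qed
qed

lemma lap_right_diff_scaled:
  assumes "continuous_on {x..x + \<delta>} F" "continuous_on {x..x + \<delta>} W"
  shows "lap_right F x \<delta> s - c * lap_right W x \<delta> s =
    s\<^sup>2 * integral {0..\<delta>} (\<lambda>t. exp (- s * t) * (F (x + t) - F x - c * (W (x + t) - W x)))"
proof -
  have shift: "continuous_on {0..\<delta>} (\<lambda>t. G (x + t))" if "continuous_on {x..x + \<delta>} G" for G :: "real \<Rightarrow> real"
    by (rule continuous_on_compose2[OF that]) (auto intro!: continuous_intros)
  have int_F: "(\<lambda>t. exp (- s * t) * (F (x + t) - F x)) integrable_on {0..\<delta>}"
    and int_W: "(\<lambda>t. c * (exp (- s * t) * (W (x + t) - W x))) integrable_on {0..\<delta>}"
    by (intro integrable_continuous_interval continuous_intros shift assms)+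
  have integrand: "(\<lambda>t. exp (- s * t) * (F (x + t) - F x - c * (W (x + t) - W x))) =
      (\<lambda>t. exp (- s * t) * (F (x + t) - F x) - c * (exp (- s * t) * (W (x + t) - W x)))"
    by (auto simp: algebra_simps)
  show ?thesis
    unfolding lap_right_def integrand integral_diff[OF int_F int_W] integral_mult_right
    by (simp add: right_diff_distrib)
qed

lemma lap_left_eq_lap_right_reflect:
  "lap_left F x \<delta> s = lap_right (\<lambda>y. - F (- y)) (- x) \<delta> s"
proof -
  have "- (- x + t) = x - t" for t :: real
    by simp
  then show ?thesis
    unfolding lap_left_def lap_right_def
    by (simp only: minus_minus minus_diff_minus mult_minus_left mult_minus_right integral_neg)
qed

definition increments_equiv_at :: "real set \<Rightarrow> real \<Rightarrow> (real \<Rightarrow> real) \<Rightarrow> real \<Rightarrow> (real \<Rightarrow> real) \<Rightarrow> bool"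
  where "increments_equiv_at S x F c W \<longleftrightarrow>
    (\<forall>e>0. \<exists>\<eta>>0. \<forall>y\<in>S. \<bar>y - x\<bar> \<le> \<eta> \<longrightarrow> \<bar>F y - F x - c * (W y - W x)\<bar> \<le> e * \<bar>y - x\<bar>)"

lemma lap_right_diff_scaled_tendsto_0:
  assumes "\<delta> > 0" "continuous_on {x..x + \<delta>} F" "continuous_on {x..x + \<delta>} W"
    and "increments_equiv_at {x..x + \<delta>} x F c W"
  shows "((\<lambda>s. lap_right F x \<delta> s - c * lap_right W x \<delta> s) \<longlongrightarrow> 0) at_top"
  unfolding lap_right_diff_scaled[OF assms(2,3)]
proof (rule laplace_quotient_tendsto_0)
  show "continuous_on {0..\<delta>} (\<lambda>t. F (x + t) - F x - c * (W (x + t) - W x))"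
    by (intro continuous_intros continuous_on_compose2[OF assms(2)] continuous_on_compose2[OF assms(3)])
      auto
  fix e :: real assume "e > 0"
  then obtain \<eta> where "\<eta> > 0" and \<eta>: "\<And>y. y \<in> {x..x + \<delta>} \<Longrightarrow> \<bar>y - x\<bar> \<le> \<eta> \<Longrightarrow>
      \<bar>F y - F x - c * (W y - W x)\<bar> \<le> e * \<bar>y - x\<bar>"
    using assms(4) unfolding increments_equiv_at_def by blast
  show "\<exists>\<eta>>0. \<forall>t\<in>{0..\<eta>}. \<bar>F (x + t) - F x - c * (W (x + t) - W x)\<bar> \<le> e * t"
    using \<eta>[of "x + _"] \<open>\<eta> > 0\<close> \<open>\<delta> > 0\<close> by (intro exI[of _ "min \<eta> \<delta>"]) auto
qed (use assms in auto)

lemma lap_left_diff_scaled_tendsto_0: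
  assumes "\<delta> > 0" "continuous_on {x - \<delta>..x} F" "continuous_on {x - \<delta>..x} W"
    and "increments_equiv_at {x - \<delta>..x} x F c W"
  shows "((\<lambda>s. lap_left F x \<delta> s - c * lap_left W x \<delta> s) \<longlongrightarrow> 0) at_top"
proof -
  have reflect: "continuous_on {- x..- x + \<delta>} (\<lambda>y. - G (- y))" if "continuous_on {x - \<delta>..x} G" for G :: "real \<Rightarrow> real"
    by (intro continuous_intros continuous_on_compose2[OF that]) auto
  have "increments_equiv_at {- x..- x + \<delta>} (- x) (\<lambda>y. - F (- y)) c (\<lambda>y. - W (- y))"
    unfolding increments_equiv_at_def
  proof (intro allI impI)
    fix e :: real assume "e > 0"
    then obtain \<eta> where "\<eta> > 0" and \<eta>: "\<And>y. y \<in> {x - \<delta>..x} \<Longrightarrow> \<bar>y - x\<bar> \<le> \<eta> \<Longrightarrow>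
        \<bar>F y - F x - c * (W y - W x)\<bar> \<le> e * \<bar>y - x\<bar>"
      using assms(4) unfolding increments_equiv_at_def by blast
    show "\<exists>\<eta>>0. \<forall>y\<in>{- x..- x + \<delta>}. \<bar>y - (- x)\<bar> \<le> \<eta> \<longrightarrow>
        \<bar>(- F (- y)) - (- F (- (- x))) - c * ((- W (- y)) - (- W (- (- x))))\<bar> \<le> e * \<bar>y - (- x)\<bar>"
      using \<eta>[of "- _"] \<open>\<eta> > 0\<close> by (intro exI[of _ \<eta>]) (auto simp: algebra_simps abs_minus_commute)
  qed
  from lap_right_diff_scaled_tendsto_0[OF assms(1) reflect reflect this] assms(2,3)
  show ?thesis
    unfolding lap_left_eq_lap_right_reflect by simp
qed

lemma le_Liminf_scaled:
  fixes X Y :: "real \<Rightarrow> real"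
  assumes "((\<lambda>s. Y s - p * X s) \<longlongrightarrow> 0) at_top" "p > 0"
    and "ereal c \<le> Liminf at_top (\<lambda>s. ereal (X s))"
  shows "ereal (c * p) \<le> Liminf at_top (\<lambda>s. ereal (Y s))"
  unfolding le_Liminf_iff
proof (intro allI impI)
  fix y assume y: "y < ereal (c * p)"
  show "eventually (\<lambda>s. y < ereal (Y s)) at_top"
  proof (cases y)
    case (real y')
    define m where "m = (c * p - y') / 2"
    have "m > 0"
      using y real unfolding m_def by auto
    then have "ereal (c - m / p) < ereal c"
      using \<open>p > 0\<close> by simp
    then have "eventually (\<lambda>s. ereal (c - m / p) < ereal (X s)) at_top"
      using assms(3) unfolding le_Liminf_iff by blast
    moreover have "eventually (\<lambda>s. dist (Y s - p * X s) 0 < m) at_top"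
      using assms(1) \<open>m > 0\<close> by (rule tendstoD)
    ultimately show ?thesis
    proof eventually_elim
      case (elim s)
      then have "p * (c - m / p) < p * X s"
        using \<open>p > 0\<close> by (intro mult_strict_left_mono) auto
      then have "c * p - m < p * X s"
        using \<open>p > 0\<close> by (simp add: algebra_simps)
      moreover have "Y s - p * X s > - m"
        using elim by (simp add: dist_real_def)
      moreover have "c * p - 2 * m = y'"
        unfolding m_def by (simp add: field_simps)
      ultimately have "y' < Y s"
        by linarith
      then show ?case
        unfolding real by simp
    qed
  qed (use y in auto)
qed

lemma lower_LD_scaled_ge:
  assumes "a < b" "x \<in> {a..b}" "continuous_on {a..b} F" "continuous_on {a..b} W" "p > 0"
    and "increments_equiv_at {a..b} x F p W" "ereal h \<le> lower_LD a b W x"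
  shows "ereal (h * p) \<le> lower_LD a b F x"
proof -
  have equiv: "increments_equiv_at S x F p W" if "S \<subseteq> {a..b}" for S
    using assms(6) that unfolding increments_equiv_at_def by (meson subsetD)
  have right: "ereal (h * p) \<le> Liminf at_top (\<lambda>s. ereal (lap_right F x \<delta> s))"
    if "\<delta> > 0" "x + \<delta> \<le> b" "ereal h \<le> Liminf at_top (\<lambda>s. ereal (lap_right W x \<delta> s))" for \<delta>
  proof (rule le_Liminf_scaled[OF lap_right_diff_scaled_tendsto_0 \<open>p > 0\<close> that(3)])
    have "{x..x + \<delta>} \<subseteq> {a..b}"
      using that assms(2) by auto
    then show "continuous_on {x..x + \<delta>} F" "continuous_on {x..x + \<delta>} W"
      and "increments_equiv_at {x..x + \<delta>} x F p W"
      using assms(3,4) equiv continuous_on_subset by blast+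
  qed (use that in simp)
  have left: "ereal (h * p) \<le> Liminf at_top (\<lambda>s. ereal (lap_left F x \<delta> s))"
    if "\<delta> > 0" "a \<le> x - \<delta>" "ereal h \<le> Liminf at_top (\<lambda>s. ereal (lap_left W x \<delta> s))" for \<delta>
  proof (rule le_Liminf_scaled[OF lap_left_diff_scaled_tendsto_0 \<open>p > 0\<close> that(3)])
    have "{x - \<delta>..x} \<subseteq> {a..b}"
      using that assms(2) by auto
    then show "continuous_on {x - \<delta>..x} F" "continuous_on {x - \<delta>..x} W"
      and "increments_equiv_at {x - \<delta>..x} x F p W"
      using assms(3,4) equiv continuous_on_subset by blast+
  qed (use that in simp)
  show ?thesis
    using assms(1,2,7) right[of "b - a"] left[of "b - a"]
      right[of "min (x - a) (b - x)"] left[of "min (x - a) (b - x)"]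
    unfolding lower_LD_def by (auto split: if_splits)
qed

lemma lower_LD_uminus: "lower_LD a b (\<lambda>y. - F y) x = - upper_LD a b F x"
proof -
  have "lap_right (\<lambda>y. - F y) x \<delta> s = - lap_right F x \<delta> s"
    and "lap_left (\<lambda>y. - F y) x \<delta> s = - lap_left F x \<delta> s" for x \<delta> s
    unfolding lap_right_def lap_left_def
    by (simp_all only: minus_diff_minus mult_minus_left mult_minus_right integral_neg)
  moreover have "min (- u) (- v) = - max u v" for u v :: ereal
    by (auto simp: min_def max_def)
  ultimately show ?thesis
    unfolding lower_LD_def upper_LD_def by (simp add: ereal_Liminf_uminus flip: uminus_ereal.simps(1))
qed

lemma laplace_minor_iff_major_uminus:
  "laplace_minor a b h V \<longleftrightarrow> laplace_major a b (\<lambda>x. - h x) (\<lambda>x. - V x)"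
  using continuous_on_minus[of _ V] continuous_on_minus[of _ "\<lambda>x. - V x"]
  unfolding laplace_minor_def laplace_major_def lower_LD_uminus
  by (auto simp flip: uminus_ereal.simps(1))

section \<open>Comparison of minor and major functions\<close>

text \<open>At a point where \<open>W - V\<close> decreases at a linear rate to the right, the right Laplace
  quotients of \<open>W\<close> would eventually lie below those of \<open>V\<close>; but both are separated
  by \<open>h x\<close>.\<close>

lemma major_minor_no_right_descent:
  assumes major: "laplace_major a b h W" and minor: "laplace_minor a b h V"
    and "a \<le> x" "x < b" "\<epsilon> > 0" "\<eta> > 0"
    and descent: "\<And>t. t \<in> {0..\<eta>} \<Longrightarrow> x + t \<le> b \<Longrightarrow> (W (x + t) - V (x + t)) - (W x - V x) \<le> - \<epsilon> * t"
  shows False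
proof -
  have cont_W: "continuous_on {a..b} W" and cont_V: "continuous_on {a..b} V"
    using major minor unfolding laplace_major_def laplace_minor_def by auto
  define \<delta> where "\<delta> = (if x = a then b - a else min (x - a) (b - x))"
  have "\<delta> > 0" "x + \<delta> \<le> b"
    using assms(3,4) unfolding \<delta>_def by auto
  have sub: "{x..x + \<delta>} \<subseteq> {a..b}"
    using \<open>a \<le> x\<close> \<open>x + \<delta> \<le> b\<close> by auto
  have "ereal (h x) \<le> lower_LD a b W x" "upper_LD a b V x \<le> ereal (h x)"
    using major minor assms(3,4) unfolding laplace_major_def laplace_minor_def by auto
  then have W_ge: "ereal (h x) \<le> Liminf at_top (\<lambda>s. ereal (lap_right W x \<delta> s))"
    and V_le: "Limsup at_top (\<lambda>s. ereal (lap_right V x \<delta> s)) \<le> ereal (h x)"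
    using assms(3,4) unfolding lower_LD_def upper_LD_def \<delta>_def by auto
  have "ereal (h x - \<epsilon> / 4) < ereal (h x)" "ereal (h x) < ereal (h x + \<epsilon> / 4)"
    using \<open>\<epsilon> > 0\<close> by simp_all
  then have "eventually (\<lambda>s. ereal (h x - \<epsilon> / 4) < ereal (lap_right W x \<delta> s)) at_top"
    and "eventually (\<lambda>s. ereal (lap_right V x \<delta> s) < ereal (h x + \<epsilon> / 4)) at_top"
    using W_ge V_le unfolding le_Liminf_iff Limsup_le_iff by blast+
  moreover have "eventually (\<lambda>s. lap_right W x \<delta> s - 1 * lap_right V x \<delta> s \<le> - \<epsilon> + \<epsilon> / 2) at_top"
    unfolding lap_right_diff_scaled[OF continuous_on_subset[OF cont_W sub] continuous_on_subset[OF cont_V sub]]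
  proof (rule laplace_quotient_eventually_le[where \<eta> = "min \<eta> \<delta>"])
    show "continuous_on {0..\<delta>} (\<lambda>t. W (x + t) - W x - 1 * (V (x + t) - V x))"
      using sub by (intro continuous_intros continuous_on_compose2[OF cont_W] continuous_on_compose2[OF cont_V])
        auto
    show "W (x + t) - W x - 1 * (V (x + t) - V x) \<le> - \<epsilon> * t" if "t \<in> {0..min \<eta> \<delta>}" for t
      using descent[of t] that \<open>x + \<delta> \<le> b\<close> by (simp add: algebra_simps)
  qed (use \<open>\<eta> > 0\<close> \<open>\<delta> > 0\<close> \<open>\<epsilon> > 0\<close> in auto)
  ultimately have "eventually (\<lambda>s::real. False) at_top"
    by eventually_elim (use \<open>\<epsilon> > 0\<close> in simp)
  then show False
    by simp
qed

text \<open>If the inequality failed, \<open>W - V + \<epsilon> x\<close> would, for small \<open>\<epsilon> > 0\<close>, attain its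
  maximum over \<open>[c, d]\<close> at some \<open>x\<^sub>0 < d\<close>, a point of linear descent of \<open>W - V\<close>.\<close>

lemma minor_increment_le_major_increment:
  assumes major: "laplace_major a b h W" and minor: "laplace_minor a b h V"
    and "a \<le> c" "c \<le> d" "d \<le> b"
  shows "V d - V c \<le> W d - W c"
proof (rule ccontr)
  assume "\<not> ?thesis"
  then have gap: "V d - V c > W d - W c"
    by simp
  then have "c < d"
    using \<open>c \<le> d\<close> by (cases "c = d") auto
  define \<epsilon> where "\<epsilon> = ((V d - V c) - (W d - W c)) / (2 * (d - c))"
  have "\<epsilon> > 0"
    unfolding \<epsilon>_def using gap \<open>c < d\<close> by auto
  define K where "K x = W x - V x + \<epsilon> * x" for x
  have "continuous_on {c..d} K"
    unfolding K_def using major minor assms(3-5) unfolding laplace_major_def laplace_minor_def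
    by (intro continuous_intros) (auto intro: continuous_on_subset)
  then obtain x\<^sub>0 where x\<^sub>0: "x\<^sub>0 \<in> {c..d}" and max: "\<And>y. y \<in> {c..d} \<Longrightarrow> K y \<le> K x\<^sub>0"
    using continuous_attains_sup[OF compact_Icc] \<open>c < d\<close> by (metis atLeastAtMost_iff empty_iff less_eq_real_def)
  have "\<epsilon> * (d - c) = ((V d - V c) - (W d - W c)) / 2"
    unfolding \<epsilon>_def using \<open>c < d\<close> by (simp add: field_simps)
  then have "K c - K d = ((V d - V c) - (W d - W c)) / 2"
    unfolding K_def by (simp add: algebra_simps)
  then have "K d < K c"
    using gap by simp
  then have "x\<^sub>0 < d"
    using max[of c] x\<^sub>0 \<open>c < d\<close> by (cases "x\<^sub>0 = d") auto
  show False
  proof (rule major_minor_no_right_descent[OF major minor])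
    fix t assume "t \<in> {0..d - x\<^sub>0}"
    then have "K (x\<^sub>0 + t) \<le> K x\<^sub>0"
      using x\<^sub>0 by (intro max) auto
    then show "(W (x\<^sub>0 + t) - V (x\<^sub>0 + t)) - (W x\<^sub>0 - V x\<^sub>0) \<le> - \<epsilon> * t"
      unfolding K_def by (simp add: algebra_simps)
  qed (use x\<^sub>0 \<open>x\<^sub>0 < d\<close> \<open>\<epsilon> > 0\<close> assms(3,5) in auto)
qed

section \<open>Weighted primitives\<close>

text \<open>For \<open>C\<^sup>1\<close> weights \<open>\<phi>\<close> this is \<open>W(a) \<phi>(a) + \<integral>\<^sub>a\<^sup>x \<phi> dW\<close>, written after integration by parts.\<close>

definition parts_primitive :: "real \<Rightarrow> (real \<Rightarrow> real) \<Rightarrow> (real \<Rightarrow> real) \<Rightarrow> (real \<Rightarrow> real) \<Rightarrow> real \<Rightarrow> real"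
  where "parts_primitive a \<phi> \<phi>' W x = W x * \<phi> x - integral {a..x} (\<lambda>t. W t * \<phi>' t)"

lemma parts_primitive_uminus:
  "parts_primitive a \<phi> \<phi>' (\<lambda>t. - W t) x = - parts_primitive a \<phi> \<phi>' W x"
  unfolding parts_primitive_def by simp

lemma small_oscillation_Icc:
  fixes W :: "real \<Rightarrow> real"
  assumes "continuous_on {a..b} W" "\<omega> > 0"
  obtains d where "d > 0" "\<And>u v s t. a \<le> u \<Longrightarrow> v \<le> b \<Longrightarrow> v - u \<le> d \<Longrightarrow>
    s \<in> {u..v} \<Longrightarrow> t \<in> {u..v} \<Longrightarrow> \<bar>W s - W t\<bar> \<le> \<omega>"
proof -
  obtain d where "d > 0" and d: "\<And>s t. s \<in> {a..b} \<Longrightarrow> t \<in> {a..b} \<Longrightarrow> dist s t < d \<Longrightarrow> dist (W s) (W t) < \<omega>"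
    using compact_uniformly_continuous[OF assms(1) compact_Icc] \<open>\<omega> > 0\<close>
    unfolding uniformly_continuous_on_def by metis
  have "\<bar>W s - W t\<bar> \<le> \<omega>" if "a \<le> u" "v \<le> b" "v - u \<le> d / 2" "s \<in> {u..v}" "t \<in> {u..v}" for u v s t
    using d[of s t] that \<open>d > 0\<close> by (force simp: dist_real_def)
  with \<open>d > 0\<close> show ?thesis
    using that[of "d / 2"] by simp
qed

locale C1_weight =
  fixes a b :: real and \<phi> \<phi>' :: "real \<Rightarrow> real"
  assumes less: "a < b"
    and has_deriv: "\<And>t. (\<phi> has_real_derivative \<phi>' t) (at t)"
    and continuous_deriv: "continuous_on {a..b} \<phi>'"
    and pos: "\<And>t. t \<in> {a..b} \<Longrightarrow> \<phi> t > 0"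
begin

abbreviation \<Phi> :: "(real \<Rightarrow> real) \<Rightarrow> real \<Rightarrow> real"
  where "\<Phi> \<equiv> parts_primitive a \<phi> \<phi>'"

lemma continuous_on_weight: "continuous_on S \<phi>"
  using has_deriv by (meson DERIV_isCont continuous_at_imp_continuous_on)

lemma integral_deriv:
  assumes "a \<le> u" "u \<le> v" "v \<le> b"
  shows "integral {u..v} \<phi>' = \<phi> v - \<phi> u"
  by (rule integral_unique, rule fundamental_theorem_of_calculus[OF \<open>u \<le> v\<close>])
    (auto simp: has_real_derivative_iff_has_vector_derivative[symmetric] intro: has_field_derivative_at_within has_deriv)

lemma deriv_bounded:
  obtains B where "B \<ge> 0" "\<And>t. t \<in> {a..b} \<Longrightarrow> \<bar>\<phi>' t\<bar> \<le> B"
  using continuous_on_compact_bound[OF compact_Icc continuous_deriv] by (metis norm_ge_zero order_trans real_norm_def)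

lemma integrable_mult_deriv:
  assumes "continuous_on {a..b} W" "a \<le> u" "v \<le> b"
  shows "(\<lambda>t. W t * \<phi>' t) integrable_on {u..v}"
proof -
  have "{u..v} \<subseteq> {a..b}"
    using assms by auto
  then show ?thesis
    by (intro integrable_continuous_interval continuous_intros continuous_on_subset[OF assms(1)]
        continuous_on_subset[OF continuous_deriv])
qed

lemma continuous_on_parts_primitive:
  assumes "continuous_on {a..b} W"
  shows "continuous_on {a..b} (\<Phi> W)"
  unfolding parts_primitive_def
  by (intro continuous_intros assms continuous_on_weight indefinite_integral_continuous_1
      integrable_mult_deriv) auto

lemma parts_primitive_increment:
  assumes "continuous_on {a..b} W" "a \<le> u" "u \<le> v" "v \<le> b"
  shows "\<Phi> W v - \<Phi> W u = W v * \<phi> v - W u * \<phi> u - integral {u..v} (\<lambda>t. W t * \<phi>' t)"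
proof -
  have "integral {a..u} (\<lambda>t. W t * \<phi>' t) + integral {u..v} (\<lambda>t. W t * \<phi>' t) =
      integral {a..v} (\<lambda>t. W t * \<phi>' t)"
    using assms by (intro Henstock_Kurzweil_Integration.integral_combine integrable_mult_deriv) auto
  then show ?thesis
    unfolding parts_primitive_def by simp
qed

lemma parts_primitive_increment_approx:
  assumes "continuous_on {a..b} W" "a \<le> u" "u \<le> v" "v \<le> b" "x \<in> {u, v}"
    and B: "\<And>t. t \<in> {a..b} \<Longrightarrow> \<bar>\<phi>' t\<bar> \<le> B"
    and osc: "\<And>s t. s \<in> {u..v} \<Longrightarrow> t \<in> {u..v} \<Longrightarrow> \<bar>W s - W t\<bar> \<le> \<omega>"
  shows "\<bar>\<Phi> W v - \<Phi> W u - \<phi> x * (W v - W u)\<bar> \<le> \<omega> * B * (v - u)"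
proof -
  define \<kappa> where "\<kappa> = (if x = u then W v else W u)"
  have "\<kappa> \<in> W ` {u..v}"
    using assms(3) unfolding \<kappa>_def by auto
  have int_const: "(\<lambda>t. \<kappa> * \<phi>' t) integrable_on {u..v}"
    using integrable_mult_deriv[of "\<lambda>_. \<kappa>"] assms(2,4) by simp
  have int_W: "(\<lambda>t. W t * \<phi>' t) integrable_on {u..v}"
    using integrable_mult_deriv assms by blast
  have "\<Phi> W v - \<Phi> W u - \<phi> x * (W v - W u) = \<kappa> * (\<phi> v - \<phi> u) - integral {u..v} (\<lambda>t. W t * \<phi>' t)"
    using parts_primitive_increment[OF assms(1-4)] assms(5) unfolding \<kappa>_def by (auto simp: algebra_simps)
  also have "\<dots> = integral {u..v} (\<lambda>t. (\<kappa> - W t) * \<phi>' t)"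
    using integral_deriv[OF assms(2-4)] integral_diff[OF int_const int_W]
    by (simp add: left_diff_distrib)
  also have "\<bar>\<dots>\<bar> \<le> \<omega> * B * (v - u)"
  proof -
    have "norm (integral {u..v} (\<lambda>t. (\<kappa> - W t) * \<phi>' t)) \<le> (\<omega> * B) * (v - u)"
    proof (rule integral_bound[OF \<open>u \<le> v\<close>])
      show "continuous_on {u..v} (\<lambda>t. (\<kappa> - W t) * \<phi>' t)"
        using assms(2,4)
        by (intro continuous_intros continuous_on_subset[OF assms(1)] continuous_on_subset[OF continuous_deriv])
          auto
      fix t assume t: "t \<in> {u..v}"
      have "\<bar>\<kappa> - W t\<bar> \<le> \<omega>" "\<bar>\<phi>' t\<bar> \<le> B" "0 \<le> \<omega>"
        using osc[OF _ t] osc[OF t t] B[of t] t assms(2,4) \<open>\<kappa> \<in> W ` {u..v}\<close> by auto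
      then show "norm ((\<kappa> - W t) * \<phi>' t) \<le> \<omega> * B"
        by (simp add: abs_mult mult_mono)
    qed
    then show ?thesis
      by simp
  qed
  finally show ?thesis .
qed

lemma increments_equiv_parts_primitive:
  assumes W: "continuous_on {a..b} W" and "x \<in> {a..b}"
  shows "increments_equiv_at {a..b} x (\<Phi> W) (\<phi> x) W"
  unfolding increments_equiv_at_def
proof (intro allI impI)
  fix e :: real assume "e > 0"
  obtain B where "B \<ge> 0" and B: "\<And>t. t \<in> {a..b} \<Longrightarrow> \<bar>\<phi>' t\<bar> \<le> B"
    using deriv_bounded by blast
  define \<omega> where "\<omega> = e / (B + 1)"
  have "\<omega> > 0" "\<omega> * B \<le> e"
    unfolding \<omega>_def using \<open>e > 0\<close> \<open>B \<ge> 0\<close> by (auto simp: field_simps)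
  then obtain d where "d > 0" and osc: "\<And>u v s t. a \<le> u \<Longrightarrow> v \<le> b \<Longrightarrow> v - u \<le> d \<Longrightarrow>
      s \<in> {u..v} \<Longrightarrow> t \<in> {u..v} \<Longrightarrow> \<bar>W s - W t\<bar> \<le> \<omega>"
    using small_oscillation_Icc[OF W] by blast
  show "\<exists>\<eta>>0. \<forall>y\<in>{a..b}. \<bar>y - x\<bar> \<le> \<eta> \<longrightarrow> \<bar>\<Phi> W y - \<Phi> W x - \<phi> x * (W y - W x)\<bar> \<le> e * \<bar>y - x\<bar>"
  proof (intro exI[of _ d] conjI ballI impI)
    fix y assume y: "y \<in> {a..b}" "\<bar>y - x\<bar> \<le> d"
    have "\<bar>\<Phi> W y - \<Phi> W x - \<phi> x * (W y - W x)\<bar> \<le> \<omega> * B * \<bar>y - x\<bar>"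
    proof (cases "x \<le> y")
      case True
      then show ?thesis
        using parts_primitive_increment_approx[OF W _ True _ _ B, of x] osc[of x y] y \<open>x \<in> {a..b}\<close>
        by auto
    next
      case False
      then have "\<bar>\<Phi> W x - \<Phi> W y - \<phi> x * (W x - W y)\<bar> \<le> \<omega> * B * (x - y)"
        using parts_primitive_increment_approx[OF W _ _ _ _ B, of y x x] osc[of y x] y \<open>x \<in> {a..b}\<close>
        by auto
      then show ?thesis
        using False by (simp add: abs_minus_commute algebra_simps)
    qed
    also have "\<dots> \<le> e * \<bar>y - x\<bar>"
      using \<open>\<omega> * B \<le> e\<close> by (simp add: mult_right_mono)
    finally show "\<bar>\<Phi> W y - \<Phi> W x - \<phi> x * (W y - W x)\<bar> \<le> e * \<bar>y - x\<bar>" .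
  qed (use \<open>d > 0\<close> in simp)
qed

lemma laplace_major_parts_primitive:
  assumes "laplace_major a b h W"
  shows "laplace_major a b (\<lambda>x. h x * \<phi> x) (\<Phi> W)"
proof -
  have W: "continuous_on {a..b} W"
    using assms unfolding laplace_major_def by simp
  have "ereal (h x * \<phi> x) \<le> lower_LD a b (\<Phi> W) x" if "x \<in> {a..b}" for x
    using assms that unfolding laplace_major_def
    by (intro lower_LD_scaled_ge[OF less that continuous_on_parts_primitive[OF W] W pos[OF that]
        increments_equiv_parts_primitive[OF W that]]) auto
  moreover have "- \<infinity> < ereal (h x * \<phi> x)" for x
    by simp
  ultimately show ?thesis
    unfolding laplace_major_def using continuous_on_parts_primitive[OF W] less_le_trans by blast
qed

lemma laplace_minor_parts_primitive:
  assumes "laplace_minor a b h V"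
  shows "laplace_minor a b (\<lambda>x. h x * \<phi> x) (\<Phi> V)"
  using laplace_major_parts_primitive[of "\<lambda>x. - h x" "\<lambda>x. - V x"] assms
  unfolding laplace_minor_iff_major_uminus parts_primitive_uminus by simp

end

section \<open>Laplace integrability of weighted products\<close>

lemma laplace_lower_le_upper:
  assumes "a \<le> b"
  shows "laplace_lower a b h \<le> laplace_upper a b h"
  unfolding laplace_lower_def laplace_upper_def
  by (intro SUP_least INF_greatest) (use minor_increment_le_major_increment assms in auto)

lemma laplace_integrable_squeeze:
  assumes "a \<le> b"
    and squeeze: "\<And>e. e > 0 \<Longrightarrow> ereal (I - e) \<le> laplace_lower a b h \<and> laplace_upper a b h \<le> ereal (I + e)"
  shows "laplace_integrable a b h" "laplace_integral a b h = I"
proof -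
  have "laplace_upper a b h \<le> ereal I"
    by (rule ereal_le_epsilon2) (use squeeze in simp)
  moreover have "ereal I \<le> laplace_lower a b h"
  proof (rule ereal_le_epsilon2)
    fix e :: real assume "e > 0"
    then have "ereal I \<le> ereal (I - e) + ereal e"
      by simp
    also have "\<dots> \<le> laplace_lower a b h + ereal e"
      using squeeze[OF \<open>e > 0\<close>] by (intro add_right_mono) simp
    finally show "ereal I \<le> laplace_lower a b h + ereal e" .
  qed
  ultimately have "laplace_upper a b h = ereal I" "laplace_lower a b h = ereal I"
    using laplace_lower_le_upper[OF \<open>a \<le> b\<close>, of h] by auto
  then show "laplace_integrable a b h" "laplace_integral a b h = I"
    unfolding laplace_integrable_def laplace_integral_def by simp_all
qed

lemma laplace_integrable_close_major_minor:
  assumes "laplace_integrable a b h" "e > 0"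
  obtains W V where "laplace_major a b h W" "laplace_minor a b h V" "(W b - W a) - (V b - V a) < e"
proof -
  obtain I where I: "laplace_upper a b h = ereal I" "laplace_lower a b h = ereal I"
    using assms(1) unfolding laplace_integrable_def by (cases "laplace_upper a b h") auto
  have "(INF W \<in> {W. laplace_major a b h W}. ereal (W b - W a)) < ereal (I + e / 2)"
    using I(1) \<open>e > 0\<close> unfolding laplace_upper_def by simp
  then obtain W where "laplace_major a b h W" "W b - W a < I + e / 2"
    unfolding INF_less_iff by auto
  moreover have "ereal (I - e / 2) < (SUP V \<in> {V. laplace_minor a b h V}. ereal (V b - V a))"
    using I(2) \<open>e > 0\<close> unfolding laplace_lower_def by simp
  then obtain V where "laplace_minor a b h V" "I - e / 2 < V b - V a"
    unfolding less_SUP_iff by auto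
  ultimately show ?thesis
    using that by force
qed

text \<open>For Laplace integrable \<open>h\<close> this is the indefinite integral \<open>x \<mapsto> \<integral>\<^sub>a\<^sup>x h\<close>.\<close>

definition upper_primitive :: "real \<Rightarrow> real \<Rightarrow> (real \<Rightarrow> real) \<Rightarrow> real \<Rightarrow> real"
  where "upper_primitive a b h x = Inf {W x - W a | W. laplace_major a b h W}"

lemma upper_primitive_between:
  assumes W: "laplace_major a b h W" and V: "laplace_minor a b h V" and x: "x \<in> {a..b}"
  shows "\<bar>(W x - W a) - upper_primitive a b h x\<bar> \<le> (W b - W a) - (V b - V a)"
    and "\<bar>upper_primitive a b h x - (V x - V a)\<bar> \<le> (W b - W a) - (V b - V a)"
proof -
  have lower: "V x - V a \<le> W' x - W' a" if "laplace_major a b h W'" for W'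
    using minor_increment_le_major_increment[OF that V, of a x] x by auto
  then have bdd: "bdd_below {W x - W a | W. laplace_major a b h W}"
    unfolding bdd_below_def by auto
  have "upper_primitive a b h x \<le> W x - W a"
    unfolding upper_primitive_def by (rule cInf_lower[OF _ bdd]) (use W in auto)
  moreover have "V x - V a \<le> upper_primitive a b h x"
    unfolding upper_primitive_def by (rule cInf_greatest) (use W lower in auto)
  moreover have "V b - V x \<le> W b - W x"
    using minor_increment_le_major_increment[OF W V, of x b] x by auto
  ultimately show "\<bar>(W x - W a) - upper_primitive a b h x\<bar> \<le> (W b - W a) - (V b - V a)"
    and "\<bar>upper_primitive a b h x - (V x - V a)\<bar> \<le> (W b - W a) - (V b - V a)"
    by auto
qed

lemma continuous_on_upper_primitive:
  assumes "laplace_integrable a b h"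
  shows "continuous_on {a..b} (upper_primitive a b h)"
  unfolding continuous_on_iff
proof (intro ballI allI impI)
  fix x e :: real assume x: "x \<in> {a..b}" and "e > 0"
  obtain W V where W: "laplace_major a b h W" and V: "laplace_minor a b h V"
    and gap: "(W b - W a) - (V b - V a) < e / 3"
    using laplace_integrable_close_major_minor[OF assms, of "e / 3"] \<open>e > 0\<close> by auto
  have "continuous_on {a..b} W"
    using W unfolding laplace_major_def by simp
  then obtain d where "d > 0" and d: "\<And>y. y \<in> {a..b} \<Longrightarrow> dist y x < d \<Longrightarrow> dist (W y) (W x) < e / 3"
    using x \<open>e > 0\<close> unfolding continuous_on_iff by (metis divide_pos_pos zero_less_numeral)
  have "dist (upper_primitive a b h y) (upper_primitive a b h x) < e" if "y \<in> {a..b}" "dist y x < d" for y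
    using d[OF that] upper_primitive_between[OF W V x] upper_primitive_between[OF W V that(1)] gap
    unfolding dist_real_def by linarith
  with \<open>d > 0\<close> show "\<exists>d>0. \<forall>y\<in>{a..b}. dist y x < d \<longrightarrow> dist (upper_primitive a b h y) (upper_primitive a b h x) < e"
    by blast
qed

context C1_weight
begin

lemma parts_primitive_increment_close:
  assumes F: "continuous_on {a..b} F" and H: "continuous_on {a..b} H"
    and close: "\<And>x. x \<in> {a..b} \<Longrightarrow> \<bar>F x - F a - H x\<bar> \<le> g"
    and B: "\<And>t. t \<in> {a..b} \<Longrightarrow> \<bar>\<phi>' t\<bar> \<le> B"
  shows "\<bar>(\<Phi> F b - \<Phi> F a) - \<Phi> H b\<bar> \<le> g * (\<bar>\<phi> b\<bar> + B * (b - a))"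
proof -
  define D where "D x = F x - F a - H x" for x
  have int_F: "(\<lambda>t. F t * \<phi>' t) integrable_on {a..b}" and int_H: "(\<lambda>t. H t * \<phi>' t) integrable_on {a..b}"
    and int_c: "(\<lambda>t. F a * \<phi>' t) integrable_on {a..b}"
    using integrable_mult_deriv[OF F] integrable_mult_deriv[OF H] integrable_mult_deriv[of "\<lambda>_. F a"] by auto
  have "integral {a..b} (\<lambda>t. D t * \<phi>' t) =
      integral {a..b} (\<lambda>t. F t * \<phi>' t) - F a * (\<phi> b - \<phi> a) - integral {a..b} (\<lambda>t. H t * \<phi>' t)"
    unfolding D_def left_diff_distrib integral_diff[OF integrable_diff[OF int_F int_c] int_H]
      integral_diff[OF int_F int_c] integral_mult_right integral_deriv[OF order_refl less_imp_le[OF less] order_refl]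
    ..
  then have "(\<Phi> F b - \<Phi> F a) - \<Phi> H b = D b * \<phi> b - integral {a..b} (\<lambda>t. D t * \<phi>' t)"
    unfolding parts_primitive_def D_def by (simp add: algebra_simps)
  moreover have "\<bar>D b * \<phi> b\<bar> \<le> g * \<bar>\<phi> b\<bar>"
    using close[of b] less unfolding D_def by (simp add: abs_mult mult_right_mono)
  moreover have "norm (integral {a..b} (\<lambda>t. D t * \<phi>' t)) \<le> (g * B) * (b - a)"
  proof (rule integral_bound)
    show "continuous_on {a..b} (\<lambda>t. D t * \<phi>' t)"
      unfolding D_def by (intro continuous_intros F H continuous_deriv)
    fix t assume t: "t \<in> {a..b}"
    have "0 \<le> g"
      using close[of a] less by auto
    then show "norm (D t * \<phi>' t) \<le> g * B"
      using close[OF t] B[OF t] unfolding D_def by (simp add: abs_mult mult_mono)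
  qed (use less in simp)
  ultimately show ?thesis
    by (simp add: algebra_simps)
qed

lemma laplace_lower_upper_mult_bounds:
  assumes "laplace_integrable a b h" "laplace_major a b h W" "laplace_minor a b h V"
    and B: "\<And>t. t \<in> {a..b} \<Longrightarrow> \<bar>\<phi>' t\<bar> \<le> B"
  defines "\<epsilon> \<equiv> ((W b - W a) - (V b - V a)) * (\<bar>\<phi> b\<bar> + B * (b - a))"
  shows "ereal (\<Phi> (upper_primitive a b h) b - \<epsilon>) \<le> laplace_lower a b (\<lambda>x. h x * \<phi> x)"
    and "laplace_upper a b (\<lambda>x. h x * \<phi> x) \<le> ereal (\<Phi> (upper_primitive a b h) b + \<epsilon>)"
proof -
  let ?H = "upper_primitive a b h"
  have H: "continuous_on {a..b} ?H"
    by (rule continuous_on_upper_primitive[OF assms(1)])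
  have cont_W: "continuous_on {a..b} W" and cont_V: "continuous_on {a..b} V"
    using assms(2,3) unfolding laplace_major_def laplace_minor_def by auto
  have "\<bar>W x - W a - ?H x\<bar> \<le> (W b - W a) - (V b - V a)"
    and "\<bar>V x - V a - ?H x\<bar> \<le> (W b - W a) - (V b - V a)" if "x \<in> {a..b}" for x
    using upper_primitive_between[OF assms(2,3) that] by (simp_all add: abs_minus_commute)
  then have "\<bar>(\<Phi> W b - \<Phi> W a) - \<Phi> ?H b\<bar> \<le> \<epsilon>" "\<bar>(\<Phi> V b - \<Phi> V a) - \<Phi> ?H b\<bar> \<le> \<epsilon>"
    unfolding \<epsilon>_def by (intro parts_primitive_increment_close cont_W cont_V H B; simp)+
  then have "ereal (\<Phi> W b - \<Phi> W a) \<le> ereal (\<Phi> ?H b + \<epsilon>)" "ereal (\<Phi> ?H b - \<epsilon>) \<le> ereal (\<Phi> V b - \<Phi> V a)"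
    by simp_all
  moreover have "laplace_upper a b (\<lambda>x. h x * \<phi> x) \<le> ereal (\<Phi> W b - \<Phi> W a)"
    unfolding laplace_upper_def by (rule INF_lower) (use laplace_major_parts_primitive[OF assms(2)] in simp)
  moreover have "ereal (\<Phi> V b - \<Phi> V a) \<le> laplace_lower a b (\<lambda>x. h x * \<phi> x)"
    unfolding laplace_lower_def by (rule SUP_upper) (use laplace_minor_parts_primitive[OF assms(3)] in simp)
  ultimately show "ereal (\<Phi> ?H b - \<epsilon>) \<le> laplace_lower a b (\<lambda>x. h x * \<phi> x)"
    and "laplace_upper a b (\<lambda>x. h x * \<phi> x) \<le> ereal (\<Phi> ?H b + \<epsilon>)"
    by (meson order_trans)+
qed

theorem laplace_integrable_mult:
  assumes "laplace_integrable a b h"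
  shows "laplace_integrable a b (\<lambda>x. h x * \<phi> x)"
    and "laplace_integral a b (\<lambda>x. h x * \<phi> x) = \<Phi> (upper_primitive a b h) b"
proof -
  let ?I = "\<Phi> (upper_primitive a b h) b"
  obtain B where "B \<ge> 0" and B: "\<And>t. t \<in> {a..b} \<Longrightarrow> \<bar>\<phi>' t\<bar> \<le> B"
    using deriv_bounded by blast
  define C where "C = \<bar>\<phi> b\<bar> + B * (b - a)"
  have "C \<ge> 0"
    unfolding C_def using \<open>B \<ge> 0\<close> less by simp
  have "ereal (?I - e) \<le> laplace_lower a b (\<lambda>x. h x * \<phi> x)
      \<and> laplace_upper a b (\<lambda>x. h x * \<phi> x) \<le> ereal (?I + e)" if "e > 0" for e
  proof -
    obtain W V where W: "laplace_major a b h W" and V: "laplace_minor a b h V"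
      and gap: "(W b - W a) - (V b - V a) < e / (C + 1)"
      using laplace_integrable_close_major_minor[OF assms, of "e / (C + 1)"] \<open>e > 0\<close> \<open>C \<ge> 0\<close> by auto
    define \<epsilon> where "\<epsilon> = ((W b - W a) - (V b - V a)) * C"
    have "0 \<le> (W b - W a) - (V b - V a)"
      using minor_increment_le_major_increment[OF W V order_refl] less by simp
    then have "\<epsilon> \<le> e"
      unfolding \<epsilon>_def using gap \<open>C \<ge> 0\<close> \<open>e > 0\<close> by (simp add: field_simps)
    then have "ereal (?I - e) \<le> ereal (?I - \<epsilon>)" "ereal (?I + \<epsilon>) \<le> ereal (?I + e)"
      by simp_all
    with laplace_lower_upper_mult_bounds[OF assms W V B] show ?thesis
      unfolding \<epsilon>_def C_def by (meson order_trans)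
  qed
  then show "laplace_integrable a b (\<lambda>x. h x * \<phi> x)" "laplace_integral a b (\<lambda>x. h x * \<phi> x) = ?I"
    using laplace_integrable_squeeze[of a b] less by auto
qed

end

section \<open>Harmonic functions and the Schwarz kernel\<close>

lemma has_pdx_pdy_Re:
  assumes "(F has_field_derivative D) (at z)"
  shows "has_pdx (\<lambda>z. Re (F z)) (Re D) z" "has_pdy (\<lambda>z. Re (F z)) (Re (\<i> * D)) z"
proof -
  have x: "((\<lambda>w. F (z + w)) has_field_derivative D * 1) (at (of_real 0))"
    by (rule DERIV_chain2[of F]) (use assms in \<open>auto intro!: derivative_eq_intros\<close>)
  have y: "((\<lambda>w. F (z + \<i> * w)) has_field_derivative D * \<i>) (at (of_real 0))"
    by (rule DERIV_chain2[of F]) (use assms in \<open>auto intro!: derivative_eq_intros\<close>)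
  have "((\<lambda>t. F (z + of_real t)) has_vector_derivative D) (at 0)"
    and "((\<lambda>t. F (z + \<i> * of_real t)) has_vector_derivative \<i> * D) (at 0)"
    using has_vector_derivative_real_field[OF x] has_vector_derivative_real_field[OF y]
    by (simp_all add: mult.commute)
  then show "has_pdx (\<lambda>z. Re (F z)) (Re D) z" "has_pdy (\<lambda>z. Re (F z)) (Re (\<i> * D)) z"
    unfolding has_pdx_def has_pdy_def by (auto dest: has_field_derivative_Re)
qed

lemma harmonic_on_Re:
  assumes "open S" "w holomorphic_on S"
  shows "harmonic_on S (\<lambda>z. Re (w z))"
proof -
  have hol': "deriv w holomorphic_on S" and hol'': "deriv (deriv w) holomorphic_on S"
    using assms by (auto intro!: holomorphic_deriv)
  have d: "(w has_field_derivative deriv w z) (at z)"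
    "(deriv w has_field_derivative deriv (deriv w) z) (at z)"
    "((\<lambda>z. \<i> * deriv w z) has_field_derivative \<i> * deriv (deriv w) z) (at z)" if "z \<in> S" for z
    using that assms hol' by (auto intro!: holomorphic_derivI derivative_eq_intros)
  have cont: "continuous_on S w" "continuous_on S (deriv w)" "continuous_on S (deriv (deriv w))"
    using assms(2) hol' hol'' by (auto intro: holomorphic_on_imp_continuous_on)
  let ?w' = "deriv w" and ?w'' = "deriv (deriv w)"
  have pointwise: "has_pdx (\<lambda>z. Re (w z)) (Re (?w' z)) z \<and> has_pdy (\<lambda>z. Re (w z)) (Re (\<i> * ?w' z)) z \<and>
      has_pdx (\<lambda>z. Re (?w' z)) (Re (?w'' z)) z \<and> has_pdy (\<lambda>z. Re (?w' z)) (Re (\<i> * ?w'' z)) z \<and>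
      has_pdx (\<lambda>z. Re (\<i> * ?w' z)) (Re (\<i> * ?w'' z)) z \<and>
      has_pdy (\<lambda>z. Re (\<i> * ?w' z)) (Re (\<i> * (\<i> * ?w'' z))) z \<and>
      Re (?w'' z) + Re (\<i> * (\<i> * ?w'' z)) = 0" if "z \<in> S" for z
    using has_pdx_pdy_Re[OF d(1)[OF that]] has_pdx_pdy_Re[OF d(2)[OF that]] has_pdx_pdy_Re[OF d(3)[OF that]]
    by simp
  have continuous: "continuous_on S (\<lambda>z. Re (w z)) \<and> continuous_on S (\<lambda>z. Re (?w' z)) \<and>
      continuous_on S (\<lambda>z. Re (\<i> * ?w' z)) \<and> continuous_on S (\<lambda>z. Re (?w'' z)) \<and>
      continuous_on S (\<lambda>z. Re (\<i> * ?w'' z)) \<and> continuous_on S (\<lambda>z. Re (\<i> * ?w'' z)) \<and>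
      continuous_on S (\<lambda>z. Re (\<i> * (\<i> * ?w'' z)))"
    by (intro conjI continuous_intros cont)
  show ?thesis
    unfolding harmonic_on_def
    by (rule conjI[OF \<open>open S\<close>], rule exI[of _ "\<lambda>z. Re (?w' z)"], rule exI[of _ "\<lambda>z. Re (\<i> * ?w' z)"],
        rule exI[of _ "\<lambda>z. Re (?w'' z)"], rule exI[of _ "\<lambda>z. Re (\<i> * ?w'' z)"],
        rule exI[of _ "\<lambda>z. Re (\<i> * ?w'' z)"], rule exI[of _ "\<lambda>z. Re (\<i> * (\<i> * ?w'' z))"])
      (use pointwise continuous in blast)
qed

definition schwarz_kernel :: "complex \<Rightarrow> real \<Rightarrow> complex"
  where "schwarz_kernel z t = (cis t + z) / (cis t - z)"

definition schwarz_kernel_dt :: "complex \<Rightarrow> real \<Rightarrow> complex"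
  where "schwarz_kernel_dt z t = - 2 * \<i> * z * cis t / (cis t - z) ^ 2"

definition schwarz_kernel_dt_dz :: "complex \<Rightarrow> real \<Rightarrow> complex"
  where "schwarz_kernel_dt_dz z t = - 2 * \<i> * cis t * (cis t + z) / (cis t - z) ^ 3"

lemma cis_minus_nonzero: "cmod z < 1 \<Longrightarrow> cis t - z \<noteq> 0"
  by (metis norm_cis order_less_irrefl right_minus_eq)

lemma has_real_derivative_Re_schwarz_kernel:
  assumes "cmod z < 1"
  shows "((\<lambda>t. Re (schwarz_kernel z t)) has_real_derivative Re (schwarz_kernel_dt z t)) (at t)"
proof -
  have "exp (\<i> * w) - z \<noteq> 0" if "w = of_real t" for w
    using cis_minus_nonzero[OF assms] that by (simp add: cis_conv_exp)
  then have "((\<lambda>w. (exp (\<i> * w) + z) / (exp (\<i> * w) - z)) has_field_derivative schwarz_kernel_dt z t)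
      (at (of_real t))"
    unfolding schwarz_kernel_dt_def cis_conv_exp
    by (auto intro!: derivative_eq_intros simp: power2_eq_square field_simps)
  from has_field_derivative_Re[OF has_vector_derivative_real_field[OF this]]
  show ?thesis
    unfolding schwarz_kernel_def cis_conv_exp .
qed

lemma has_field_derivative_schwarz_kernel_dt:
  assumes "cmod z < 1"
  shows "((\<lambda>z. schwarz_kernel_dt z t) has_field_derivative schwarz_kernel_dt_dz z t) (at z within U)"
proof -
  have "((\<lambda>z. z / (cis t - z) ^ 2) has_field_derivative (cis t + z) / (cis t - z) ^ 3) (at z within U)"
    using cis_minus_nonzero[OF assms]
    by (auto intro!: derivative_eq_intros simp: divide_simps) (simp add: algebra_simps eval_nat_numeral)
  from DERIV_cmult[OF this, of "- 2 * \<i> * cis t"] show ?thesis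
    unfolding schwarz_kernel_dt_def schwarz_kernel_dt_dz_def by (simp add: algebra_simps)
qed

lemma Re_schwarz_kernel: "Re (schwarz_kernel (of_real r * cis \<theta>) t) = poisson_kernel r (\<theta> - t)"
proof -
  have s: "(sin t)\<^sup>2 + (cos t)\<^sup>2 = 1" "(sin \<theta>)\<^sup>2 + (cos \<theta>)\<^sup>2 = 1"
    by simp_all
  have "Re (cis t + r * cis \<theta>) * Re (cis t - r * cis \<theta>) + Im (cis t + r * cis \<theta>) * Im (cis t - r * cis \<theta>)
      = (cos t + r * cos \<theta>) * (cos t - r * cos \<theta>) + (sin t + r * sin \<theta>) * (sin t - r * sin \<theta>)"
    by simp
  also have "\<dots> = 1 - r\<^sup>2"
    using s by algebra
  finally have num: "Re (cis t + r * cis \<theta>) * Re (cis t - r * cis \<theta>)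
      + Im (cis t + r * cis \<theta>) * Im (cis t - r * cis \<theta>) = 1 - r\<^sup>2" .
  have "(Re (cis t - r * cis \<theta>))\<^sup>2 + (Im (cis t - r * cis \<theta>))\<^sup>2
      = (cos t - r * cos \<theta>)\<^sup>2 + (sin t - r * sin \<theta>)\<^sup>2"
    by simp
  also have "\<dots> = 1 - 2 * r * cos (\<theta> - t) + r\<^sup>2"
    unfolding cos_diff using s by algebra
  finally have den: "(Re (cis t - r * cis \<theta>))\<^sup>2 + (Im (cis t - r * cis \<theta>))\<^sup>2
      = 1 - 2 * r * cos (\<theta> - t) + r\<^sup>2" .
  show ?thesis
    unfolding schwarz_kernel_def poisson_kernel_def Re_divide num den ..
qed

lemma poisson_kernel_pos:
  assumes "0 \<le> r" "r < 1"
  shows "poisson_kernel r u > 0"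
proof -
  have "r * cos u \<le> r"
    using assms by (intro mult_left_le) auto
  then have "1 - 2 * r * cos u + r\<^sup>2 \<ge> (1 - r)\<^sup>2"
    by (simp add: power2_eq_square algebra_simps)
  moreover have "(1 - r)\<^sup>2 > 0" "r\<^sup>2 < 1"
    using assms by (simp_all add: power_less_one_iff abs_square_less_1)
  ultimately show ?thesis
    unfolding poisson_kernel_def by (intro divide_pos_pos) linarith+
qed

lemma continuous_on_schwarz_kernel_dt:
  assumes "cmod z < 1"
  shows "continuous_on S (\<lambda>t. schwarz_kernel_dt z t)"
  unfolding schwarz_kernel_dt_def using cis_minus_nonzero[OF assms]
  by (intro continuous_intros) auto

lemma C1_weight_poisson_kernel:
  assumes "a < b" "0 \<le> r" "r < 1"
  shows "C1_weight a b (\<lambda>t. poisson_kernel r (\<theta> - t)) (\<lambda>t. Re (schwarz_kernel_dt (of_real r * cis \<theta>) t))"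
proof
  have "cmod (of_real r * cis \<theta>) < 1"
    using assms by (simp add: norm_mult)
  from has_real_derivative_Re_schwarz_kernel[OF this]
  show "((\<lambda>t. poisson_kernel r (\<theta> - t)) has_real_derivative Re (schwarz_kernel_dt (of_real r * cis \<theta>) t)) (at t)" for t
    unfolding Re_schwarz_kernel .
  show "continuous_on {a..b} (\<lambda>t. Re (schwarz_kernel_dt (of_real r * cis \<theta>) t))"
    by (intro continuous_intros continuous_on_schwarz_kernel_dt) fact
qed (use assms poisson_kernel_pos in auto)

text \<open>The Schwarz integral \<open>(2\<pi>)\<^sup>-\<^sup>1 \<integral> schwarz_kernel z t dH(t)\<close> over \<open>[-\<pi>, \<pi>]\<close>, written after
  integration by parts for a primitive \<open>H\<close> with \<open>H(-\<pi>) = 0\<close>.\<close>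

definition schwarz_integral :: "(real \<Rightarrow> real) \<Rightarrow> complex \<Rightarrow> complex"
  where "schwarz_integral H z =
    (of_real (H pi) * schwarz_kernel z pi - integral {-pi..pi} (\<lambda>t. of_real (H t) * schwarz_kernel_dt z t)) / (2 * pi)"

lemma holomorphic_on_schwarz_integral:
  assumes H: "continuous_on {-pi..pi} H"
  shows "schwarz_integral H holomorphic_on ball 0 1"
proof -
  have "(\<lambda>z. integral (cbox (-pi) pi) (\<lambda>t. of_real (H t) * schwarz_kernel_dt z t)) holomorphic_on ball 0 1"
  proof (rule leibniz_rule_holomorphic[where fx = "\<lambda>z t. of_real (H t) * schwarz_kernel_dt_dz z t"])
    fix z t assume "z \<in> ball (0::complex) 1"
    then show "((\<lambda>z. of_real (H t) * schwarz_kernel_dt z t) has_field_derivative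
        of_real (H t) * schwarz_kernel_dt_dz z t) (at z within ball 0 1)"
      by (intro DERIV_cmult has_field_derivative_schwarz_kernel_dt) simp
  next
    fix z assume "z \<in> ball (0::complex) 1"
    then show "(\<lambda>t. of_real (H t) * schwarz_kernel_dt z t) integrable_on cbox (-pi) pi"
      by (auto intro!: integrable_continuous_interval continuous_intros continuous_on_schwarz_kernel_dt H)
  next
    have "continuous_on (ball 0 1 \<times> {-pi..pi}) (\<lambda>p. H (snd p))"
      by (rule continuous_on_compose2[OF H continuous_on_snd]) auto
    moreover have "cis (snd p) - fst p \<noteq> 0" if "p \<in> ball 0 1 \<times> {-pi..pi}" for p
      using that cis_minus_nonzero by auto
    ultimately show "continuous_on (ball 0 1 \<times> cbox (-pi) pi) (\<lambda>(z, t). of_real (H t) * schwarz_kernel_dt_dz z t)"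
      unfolding schwarz_kernel_dt_dz_def case_prod_beta' by (auto intro!: continuous_intros)
  qed (rule convex_ball)
  then show ?thesis
    unfolding schwarz_integral_def schwarz_kernel_def using cis_minus_nonzero[of _ pi]
    by (intro holomorphic_intros) auto
qed

lemma Re_schwarz_integral:
  assumes H: "continuous_on {-pi..pi} H" and "0 \<le> r" "r < 1"
  shows "Re (schwarz_integral H (of_real r * cis \<theta>)) =
    parts_primitive (-pi) (\<lambda>t. poisson_kernel r (\<theta> - t)) (\<lambda>t. Re (schwarz_kernel_dt (of_real r * cis \<theta>) t)) H pi / (2 * pi)"
proof -
  let ?z = "of_real r * cis \<theta>"
  have "cmod ?z < 1"
    using assms by (simp add: norm_mult)
  then have "(\<lambda>t. of_real (H t) * schwarz_kernel_dt ?z t) integrable_on {-pi..pi}"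
    by (intro integrable_continuous_interval continuous_intros continuous_on_schwarz_kernel_dt H)
  from has_integral_Re[OF integrable_integral[OF this]]
  have "Re (integral {-pi..pi} (\<lambda>t. of_real (H t) * schwarz_kernel_dt ?z t)) =
      integral {-pi..pi} (\<lambda>t. H t * Re (schwarz_kernel_dt ?z t))"
    by (simp add: integral_unique)
  then show ?thesis
    unfolding schwarz_integral_def parts_primitive_def by (simp add: Re_schwarz_kernel)
qed

theorem theorem10p2:
  fixes f :: "complex \<Rightarrow> real"
  defines "G \<equiv> (\<lambda>t. f (cis t))"
  assumes "laplace_integrable (-pi) pi G"
  shows "(\<forall>r\<in>{0..<1}. \<forall>\<theta>\<in>{-pi..pi}.
            laplace_integrable (-pi) pi (\<lambda>t. G t * poisson_kernel r (\<theta> - t)))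
       \<and> (\<exists>u. harmonic_on (ball 0 1) u \<and>
            (\<forall>r\<in>{0..<1}. \<forall>\<theta>\<in>{-pi..pi}.
               u (complex_of_real r * cis \<theta>) =
                 1 / (2 * pi) * laplace_integral (-pi) pi (\<lambda>t. G t * poisson_kernel r (\<theta> - t))))"
proof -
  define H where "H = upper_primitive (-pi) pi G"
  have H: "continuous_on {-pi..pi} H"
    unfolding H_def by (rule continuous_on_upper_primitive[OF assms(2)])
  note weighted = C1_weight.laplace_integrable_mult[OF C1_weight_poisson_kernel assms(2)]
  show ?thesis
  proof (intro conjI ballI exI[of _ "\<lambda>z. Re (schwarz_integral H z)"])
    fix r \<theta> :: real assume "r \<in> {0..<1}"
    then show "laplace_integrable (-pi) pi (\<lambda>t. G t * poisson_kernel r (\<theta> - t))"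
      using weighted(1) by simp
    show "Re (schwarz_integral H (of_real r * cis \<theta>)) =
        1 / (2 * pi) * laplace_integral (-pi) pi (\<lambda>t. G t * poisson_kernel r (\<theta> - t))"
      using Re_schwarz_integral[OF H] weighted(2) \<open>r \<in> {0..<1}\<close> unfolding H_def by simp
  qed (intro harmonic_on_Re open_ball holomorphic_on_schwarz_integral H)
qed

end
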